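(* Let $0\neq h\in\mathbb{F}[x]$ and regard $A_h\subseteq A_1$ via $x\mapsto x$, $\hat y\mapsto yh$. (1) If $\mathrm{char}(\mathbb{F})=0$, then the center $Z(A_h)$ is $\mathbb{F}1$. (2) If $\mathrm{char}(\mathbb{F})=p>0$, then $x^p$ and $h^py^p$ are algebraically independent and $Z(A_h)=\mathbb{F}[x^p,h^py^p]$ is a polynomial algebra in these two elements. Moreover $h$ divides $\delta^p(x)$ in $\mathbb{F}[x]$, and $$h^py^p=y^ph^p=\hat y(\hat y+h')(\hat y+2h')\cdots(\hat y+(p-1)h')=\hat y^p-\frac{\delta^p(x)}{h}\,\hat y.$$
   Context: For $h\in\mathbb{F}[x]$, $A_h$ is the unital associative $\mathbb{F}$-algebra generated by $x,\hat y$ with defining relation $\hat yx-x\hat y=h$. $A_1$ is the Weyl algebra, generated by $x,y$ with $yx-xy=1$; for $h\ne0$, $x\mapsto x,\ \hat y\mapsto yh$ embeds $A_h$ into $A_1$. $\delta:\mathbb{F}[x]\to\mathbb{F}[x]$ is the derivation $\delta(f)=hf'$, where $f'$ is the formal derivative, and $\delta^p$ is its $p$-th iterate. *)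

theory Defs
  imports "HOL-Computational_Algebra.Polynomial"
begin

text \<open>The Weyl algebra A_1 over a field, realised on its standard PBW basis:
  an element is a finite sum of f_i(x) y^i (f_i in F[x]), encoded as a polynomial in y
  whose coefficients are polynomials in x (type 'a poly poly). Addition is that of
  'a poly poly; multiplication is the Weyl product determined by yx - xy = 1,
  i.e. (f y^i)(g y^j) = sum_k (i choose k) f g^(k) y^(i+j-k).\<close>

definition wmult :: "'a::idom poly poly \<Rightarrow> 'a poly poly \<Rightarrow> 'a poly poly" where
  "wmult P Q = (\<Sum>i\<le>degree P. \<Sum>j\<le>degree Q. \<Sum>k\<le>i.
      monom (coeff P i * (of_nat (i choose k) * (pderiv ^^ k) (coeff Q j))) (i + j - k))"

primrec wpow :: "'a::idom poly poly \<Rightarrow> nat \<Rightarrow> 'a poly poly" where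
  "wpow P 0 = 1"
| "wpow P (Suc n) = wmult P (wpow P n)"

definition wlistprod :: "'a::idom poly poly list \<Rightarrow> 'a poly poly" where
  "wlistprod xs = foldr wmult xs 1"

definition wC :: "'a::idom poly \<Rightarrow> 'a poly poly" where
  "wC f = [:f:]"

definition wX :: "'a::idom poly poly" where
  "wX = wC [:0, 1:]"

definition wY :: "'a::idom poly poly" where
  "wY = [:0, 1:]"

definition wYhat :: "'a::idom poly \<Rightarrow> 'a poly poly" where
  "wYhat h = wmult wY (wC h)"

inductive_set Ah :: "'a::idom poly \<Rightarrow> 'a poly poly set" for h where
  scalar: "wC [:c:] \<in> Ah h"
| genx: "wX \<in> Ah h"
| geny: "wYhat h \<in> Ah h"
| add: "a \<in> Ah h \<Longrightarrow> b \<in> Ah h \<Longrightarrow> a + b \<in> Ah h"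
| mult: "a \<in> Ah h \<Longrightarrow> b \<in> Ah h \<Longrightarrow> wmult a b \<in> Ah h"

definition center_Ah :: "'a::idom poly \<Rightarrow> 'a poly poly set" where
  "center_Ah h = {z \<in> Ah h. \<forall>a \<in> Ah h. wmult z a = wmult a z}"

text \<open>Evaluation of a bivariate polynomial Q(u,v) (encoded as 'a poly poly:
  outer variable v, inner variable u) at elements U, V of A_1:
  sum_{i,j} coeff (coeff Q i) j * U^j * V^i.\<close>
definition weval2 :: "'a::idom poly poly \<Rightarrow> 'a poly poly \<Rightarrow> 'a poly poly \<Rightarrow> 'a poly poly" where
  "weval2 Q U V = (\<Sum>i\<le>degree Q. \<Sum>j\<le>degree (coeff Q i).
      wmult (wC [:coeff (coeff Q i) j:]) (wmult (wpow U j) (wpow V i)))"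

definition hderiv :: "'a::idom poly \<Rightarrow> 'a poly \<Rightarrow> 'a poly" where
  "hderiv h f = h * pderiv f"

end

theory Submission
  imports Defs "HOL-Computational_Algebra.Primes"
begin

text \<open>An element commutes with x iff its
  y-expansion has vanishing derivative in y, and with y iff all its coefficients have vanishing
  derivative in x; a central element of A_h commutes with x and with y h, hence with y, since h is
  not a zero divisor. In characteristic 0 this leaves the scalars. In characteristic p it leaves
  the sums of f_i(x^p) y^(p i), and membership in A_h forces h^(p i) to divide f_i; so the centre
  consists of the sums of g_i(x^p) (h^p y^p)^i, with unique g_i. That h^p y^p lies in A_h comes
  from the binomial formula in characteristic p: (y h)^p x = x (y h)^p + ad(y h)^p(x), and
  ad(y h)^p(x) = delta^p(x). Hence D = (y h)^p - (delta^p(x)/h) y h - h^p y^p commutes with x, so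
  its y-coefficients vanish off the multiples of p; at positive multiples of p they vanish by a
  degree count. As D is a right multiple of y h, D = 0.\<close>

lemma wmult_monom:
  "wmult (monom f i) (monom g j) =
   (\<Sum>k\<le>i. monom (f * (of_nat (i choose k) * (pderiv ^^ k) g)) (i + j - k))"
proof (cases "f = 0 \<or> g = 0")
  case True
  then show ?thesis by (auto simp: wmult_def)
next
  case False
  define S where "S = (\<Sum>k\<le>i. monom (f * (of_nat (i choose k) * (pderiv ^^ k) g)) (i + j - k))"
  have single: "(\<Sum>k\<le>i'. monom (coeff (monom f i) i' * (of_nat (i' choose k) *
                  (pderiv ^^ k) (coeff (monom g j) j'))) (i' + j' - k))
           = (if i' = i then if j' = j then S else 0 else 0)" for i' j'
    by (auto simp: S_def coeff_monom)
  have "wmult (monom f i) (monom g j) = (\<Sum>i'\<le>i. \<Sum>j'\<le>j. if i' = i then if j' = j then S else 0 else 0)"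
    unfolding wmult_def using False by (simp only: single) (simp add: degree_monom_eq)
  also have "\<dots> = (\<Sum>i'\<le>i. if i' = i then S else 0)"
    by (intro sum.cong refl) auto
  also have "\<dots> = S"
    by simp
  finally show ?thesis unfolding S_def .
qed

lemma wmult_expand:
  assumes "degree P \<le> N" "degree Q \<le> M"
  shows "wmult P Q = (\<Sum>i\<le>N. \<Sum>j\<le>M. wmult (monom (coeff P i) i) (monom (coeff Q j) j))"
proof -
  define T where "T i j = (\<Sum>k\<le>i. monom (coeff P i * (of_nat (i choose k) *
                              (pderiv ^^ k) (coeff Q j))) (i + j - k))" for i j
  have "wmult P Q = (\<Sum>i\<le>degree P. \<Sum>j\<le>degree Q. T i j)"
    unfolding wmult_def T_def ..
  also have "\<dots> = (\<Sum>i\<le>N. \<Sum>j\<le>degree Q. T i j)"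
    by (rule sum.mono_neutral_left) (use assms in \<open>auto simp: T_def coeff_eq_0\<close>)
  also have "\<dots> = (\<Sum>i\<le>N. \<Sum>j\<le>M. T i j)"
    by (intro sum.cong refl sum.mono_neutral_left) (use assms in \<open>auto simp: T_def coeff_eq_0\<close>)
  finally show ?thesis by (simp add: T_def wmult_monom)
qed

lemma wmult_0_left [simp]: "wmult 0 Q = 0"
  by (simp add: wmult_def)

lemma wmult_0_right [simp]: "wmult P 0 = 0"
  by (simp add: wmult_def)

lemma wmult_monom_add_left:
  "wmult (monom (a + b) i) (monom g j) = wmult (monom a i) (monom g j) + wmult (monom b i) (monom g j)"
  unfolding wmult_monom by (simp only: distrib_right add_monom[symmetric] sum.distrib)

lemma wmult_monom_add_right:
  "wmult (monom f i) (monom (a + b) j) = wmult (monom f i) (monom a j) + wmult (monom f i) (monom b j)"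
  unfolding wmult_monom by (simp only: higher_pderiv_add distrib_left add_monom[symmetric] sum.distrib)

lemma wmult_add_left: "wmult (P + Q) R = wmult P R + wmult Q R"
proof -
  define N where "N = max (degree P) (degree Q)"
  have d: "degree P \<le> N" "degree Q \<le> N" "degree (P + Q) \<le> N"
    using degree_add_le_max[of P Q] by (auto simp: N_def)
  show ?thesis
    by (simp add: wmult_expand[OF d(1) order_refl] wmult_expand[OF d(2) order_refl]
        wmult_expand[OF d(3) order_refl] wmult_monom_add_left sum.distrib)
qed

lemma wmult_add_right: "wmult P (Q + R) = wmult P Q + wmult P R"
proof -
  define N where "N = max (degree Q) (degree R)"
  have d: "degree Q \<le> N" "degree R \<le> N" "degree (Q + R) \<le> N"
    using degree_add_le_max[of Q R] by (auto simp: N_def)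
  show ?thesis
    by (simp add: wmult_expand[OF order_refl d(1)] wmult_expand[OF order_refl d(2)]
        wmult_expand[OF order_refl d(3)] wmult_monom_add_right sum.distrib)
qed

lemma wmult_sum_left: "wmult (sum f A) R = (\<Sum>x\<in>A. wmult (f x) R)"
  by (induct A rule: infinite_finite_induct) (auto simp: wmult_add_left)

lemma wmult_sum_right: "wmult P (sum f A) = (\<Sum>x\<in>A. wmult P (f x))"
  by (induct A rule: infinite_finite_induct) (auto simp: wmult_add_right)

lemma smult_sum_right: "smult c (sum f A) = (\<Sum>x\<in>A. smult c (f x))"
  by (induct A rule: infinite_finite_induct) (auto simp: smult_add_right)

lemma pderiv_sum: "pderiv (sum f A) = (\<Sum>x\<in>A. pderiv (f x))"
  by (induct A rule: infinite_finite_induct) (auto simp: pderiv_add)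

lemma higher_pderiv_eq_0: "pderiv g = 0 \<Longrightarrow> 0 < k \<Longrightarrow> (pderiv ^^ k) g = 0"
  by (cases k) (auto simp: funpow_Suc_right simp del: funpow.simps)

lemma wmult_monom_pderiv_eq_0:
  assumes "pderiv g = 0"
  shows "wmult (monom f i) (monom g j) = monom (f * g) (i + j)"
proof -
  have "wmult (monom f i) (monom g j) = (\<Sum>k\<le>i. if k = 0 then monom (f * g) (i + j) else 0)"
    unfolding wmult_monom by (intro sum.cong refl) (auto simp: higher_pderiv_eq_0[OF assms])
  then show ?thesis by simp
qed

lemma wmult_monom_right_pderiv_eq_0:
  assumes "pderiv g = 0"
  shows "wmult P (monom g j) = P * monom g j"
proof -
  have "wmult P (monom g j) = (\<Sum>i\<le>degree P. wmult (monom (coeff P i) i) (monom g j))"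
    by (subst (1) poly_as_sum_of_monoms[of P, symmetric]) (simp add: wmult_sum_left)
  also have "\<dots> = (\<Sum>i\<le>degree P. monom (coeff P i) i * monom g j)"
    by (simp add: wmult_monom_pderiv_eq_0[OF assms] mult_monom)
  also have "\<dots> = P * monom g j"
    by (subst (3) poly_as_sum_of_monoms[of P, symmetric]) (simp add: sum_distrib_right)
  finally show ?thesis .
qed

lemma wmult_1_right [simp]: "wmult P 1 = P"
  using wmult_monom_right_pderiv_eq_0[of 1 P 0] by simp

text \<open>Left multiplication by y, from y f = f y + f'.\<close>

definition ymult :: "'a::idom poly poly \<Rightarrow> 'a poly poly" where
  "ymult R = pCons 0 R + map_poly pderiv R"

lemma ymult_add: "ymult (P + Q) = ymult P + ymult Q"
  by (simp add: ymult_def poly_eq_iff coeff_map_poly pderiv_add coeff_pCons split: nat.split)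

lemma ymult_0 [simp]: "ymult 0 = 0"
  by (simp add: ymult_def)

lemma ymult_sum: "ymult (sum f A) = (\<Sum>x\<in>A. ymult (f x))"
  by (induct A rule: infinite_finite_induct) (auto simp: ymult_add)

lemma ymult_monom: "ymult (monom c n) = monom c (Suc n) + monom (pderiv c) n"
  by (simp add: ymult_def monom_Suc map_poly_monom)

lemma ymult_smult: "ymult (smult g X) = smult g (ymult X) + smult (pderiv g) X"
  by (simp add: ymult_def poly_eq_iff coeff_map_poly pderiv_mult coeff_pCons algebra_simps
      split: nat.split)

lemma pascal_sum:
  fixes T :: "nat \<Rightarrow> nat \<Rightarrow> nat \<Rightarrow> 'b::comm_monoid_add"
  assumes add: "\<And>a b k m. T (a + b) k m = T a k m + T b k m" and zero: "\<And>k m. T 0 k m = 0"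
  shows "(\<Sum>k\<le>n. T (n choose k) (Suc k) (n - k) + T (n choose k) k (Suc (n - k)))
       = (\<Sum>k\<le>Suc n. T (Suc n choose k) k (Suc n - k))"
proof -
  have shifted: "(\<Sum>k\<le>Suc n. T (n choose k) k (Suc n - k))
      = T 1 0 (Suc n) + (\<Sum>k\<le>n. T (n choose Suc k) (Suc k) (n - k))"
    by (subst sum.atMost_Suc_shift) simp
  have unshifted: "(\<Sum>k\<le>Suc n. T (n choose k) k (Suc n - k)) = (\<Sum>k\<le>n. T (n choose k) k (Suc (n - k)))"
    by (simp add: zero Suc_diff_le binomial_eq_0)
  have "(\<Sum>k\<le>Suc n. T (Suc n choose k) k (Suc n - k))
      = T 1 0 (Suc n) + (\<Sum>k\<le>n. T (Suc n choose Suc k) (Suc k) (n - k))"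
    by (subst sum.atMost_Suc_shift) simp
  also have "\<dots> = (\<Sum>k\<le>n. T (n choose k) (Suc k) (n - k))
                 + (T 1 0 (Suc n) + (\<Sum>k\<le>n. T (n choose Suc k) (Suc k) (n - k)))"
    by (simp add: add sum.distrib add_ac)
  finally show ?thesis
    using shifted unshifted by (simp add: sum.distrib)
qed

lemma wmult_monom_1_Suc_monom:
  "wmult (monom 1 (Suc i)) (monom g j) = ymult (wmult (monom 1 i) (monom g j))"
proof -
  define T where "T c k m = monom (of_nat c * (pderiv ^^ k) g) (m + j)" for c k m
  have add: "\<And>a b k m. T (a + b) k m = T a k m + T b k m"
    by (simp add: T_def distrib_right add_monom)
  have "ymult (wmult (monom 1 i) (monom g j))
      = (\<Sum>k\<le>i. T (i choose k) (Suc k) (i - k) + T (i choose k) k (Suc (i - k)))"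
    by (simp add: wmult_monom ymult_sum ymult_monom T_def pderiv_mult add_ac)
  also have "\<dots> = (\<Sum>k\<le>Suc i. T (Suc i choose k) k (Suc i - k))"
    by (rule pascal_sum[OF add]) (simp add: T_def)
  finally show ?thesis by (simp add: wmult_monom T_def)
qed

lemma wmult_monom_1_Suc: "wmult (monom 1 (Suc i)) R = ymult (wmult (monom 1 i) R)"
  by (subst (1 2) poly_as_sum_of_monoms[of R, symmetric])
     (simp add: wmult_sum_right ymult_sum wmult_monom_1_Suc_monom)

lemma wmult_1_left [simp]: "wmult 1 R = R"
proof -
  have monoms: "wmult 1 (monom g j) = monom g j" for g j
    using wmult_monom[of 1 0 g j] by simp
  show ?thesis
    by (subst (1 2) poly_as_sum_of_monoms[of R, symmetric]) (simp add: wmult_sum_right monoms)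
qed

lemma wmult_monom_left: "wmult (monom f i) R = smult f (wmult (monom 1 i) R)"
proof -
  have "wmult (monom f i) (monom g j) = smult f (wmult (monom 1 i) (monom g j))" for g j
    by (simp only: wmult_monom) (simp add: smult_sum_right smult_monom mult_ac)
  then show ?thesis
    by (subst (1 2) poly_as_sum_of_monoms[of R, symmetric])
       (simp add: wmult_sum_right smult_sum_right)
qed

lemma wmult_smult_left: "wmult (smult f P) R = smult f (wmult P R)"
proof -
  have "wmult (smult f (monom c i)) R = smult f (wmult (monom c i) R)" for c i
    by (simp only: smult_monom wmult_monom_left[of "f * c" i R] wmult_monom_left[of c i R] smult_smult)
  then show ?thesis
    by (subst (1 2) poly_as_sum_of_monoms[of P, symmetric]) (simp add: wmult_sum_left smult_sum_right)
qed

lemma wmult_const_left: "wmult [:f:] P = smult f P"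
  using wmult_monom_left[of f 0 P] by (simp add: monom_0 one_pCons[symmetric])

lemma wmult_ymult_left: "wmult (ymult T) R = ymult (wmult T R)"
proof -
  have "wmult (ymult (monom g j)) R = ymult (wmult (monom g j) R)" for g j
  proof -
    have "wmult (monom g (Suc j)) R = smult g (ymult (wmult (monom 1 j) R))"
      by (simp only: wmult_monom_left[of g "Suc j" R] wmult_monom_1_Suc)
    then show ?thesis
      by (simp only: ymult_monom wmult_add_left wmult_monom_left[of "pderiv g" j R]
          wmult_monom_left[of g j R] ymult_smult)
  qed
  then show ?thesis
    by (subst (1 2) poly_as_sum_of_monoms[of T, symmetric]) (simp add: wmult_sum_left ymult_sum)
qed

text \<open>By wmult_monom_left it suffices to treat left factors y^i, and y^(i+1) acts as y after
  y^i.\<close>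

lemma wmult_assoc: "wmult (wmult P Q) R = wmult P (wmult Q R)"
proof -
  have powers: "wmult (wmult (monom 1 i) Q) R = wmult (monom 1 i) (wmult Q R)" for i
    by (induct i) (simp_all add: wmult_monom_1_Suc wmult_ymult_left)
  have "wmult (wmult (monom c i) Q) R = wmult (monom c i) (wmult Q R)" for c i
    by (simp only: wmult_monom_left[of c i Q] wmult_monom_left[of c i "wmult Q R"]
        wmult_smult_left powers)
  then show ?thesis
    by (subst (1 2) poly_as_sum_of_monoms[of P, symmetric]) (simp add: wmult_sum_left)
qed

typedef (overloaded) ('a::idom) weyl = "UNIV :: 'a poly poly set"
  by auto

setup_lifting type_definition_weyl

instantiation weyl :: (idom) ring_1
begin
lift_definition zero_weyl :: "'a weyl" is 0 .
lift_definition one_weyl :: "'a weyl" is 1 .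
lift_definition plus_weyl :: "'a weyl \<Rightarrow> 'a weyl \<Rightarrow> 'a weyl" is "(+)" .
lift_definition minus_weyl :: "'a weyl \<Rightarrow> 'a weyl \<Rightarrow> 'a weyl" is "(-)" .
lift_definition uminus_weyl :: "'a weyl \<Rightarrow> 'a weyl" is uminus .
lift_definition times_weyl :: "'a weyl \<Rightarrow> 'a weyl \<Rightarrow> 'a weyl" is wmult .
instance
proof
  fix a b c :: "'a weyl"
  show "a * b * c = a * (b * c)" by transfer (rule wmult_assoc)
  show "a + b + c = a + (b + c)" by transfer (rule add.assoc)
  show "a + b = b + a" by transfer (rule add.commute)
  show "0 + a = a" by transfer simp
  show "- a + a = 0" by transfer simp
  show "a - b = a + - b" by transfer simp
  show "(a + b) * c = a * c + b * c" by transfer (rule wmult_add_left)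
  show "a * (b + c) = a * b + a * c" by transfer (rule wmult_add_right)
  show "1 * a = a" by transfer simp
  show "a * 1 = a" by transfer simp
  show "(0::'a weyl) \<noteq> 1" by transfer simp
qed
end

lemma weyl_eq_iff: "a = b \<longleftrightarrow> Rep_weyl a = Rep_weyl b"
  by (simp add: Rep_weyl_inject)

lemma Rep_weyl_add: "Rep_weyl (a + b) = Rep_weyl a + Rep_weyl b" by transfer simp
lemma Rep_weyl_diff: "Rep_weyl (a - b) = Rep_weyl a - Rep_weyl b" by transfer simp
lemma Rep_weyl_0 [simp]: "Rep_weyl 0 = 0" by transfer simp
lemma Rep_weyl_1 [simp]: "Rep_weyl 1 = 1" by transfer simp
lemma Rep_weyl_mult: "Rep_weyl (a * b) = wmult (Rep_weyl a) (Rep_weyl b)" by transfer simp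

lemma Rep_weyl_sum: "Rep_weyl (sum f A) = (\<Sum>x\<in>A. Rep_weyl (f x))"
  by (induct A rule: infinite_finite_induct) (auto simp: Rep_weyl_add)

lemma Rep_weyl_power: "Rep_weyl (a ^ n) = wpow (Rep_weyl a) n"
  by (induct n) (auto simp: Rep_weyl_mult)

lemma Rep_weyl_prod_list: "Rep_weyl (prod_list xs) = foldr wmult (map Rep_weyl xs) 1"
  by (induct xs) (auto simp: Rep_weyl_mult)

lemma Rep_weyl_of_nat: "Rep_weyl (of_nat n) = of_nat n"
  by (induct n) (auto simp: Rep_weyl_add)

lemma Rep_Abs_weyl [simp]: "Rep_weyl (Abs_weyl P) = P"
  by (simp add: Abs_weyl_inverse)

definition Wc :: "'a::idom poly \<Rightarrow> 'a weyl" where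
  "Wc f = Abs_weyl (wC f)"

definition Wx :: "'a::idom weyl" where
  "Wx = Wc [:0, 1:]"

definition Wy :: "'a::idom weyl" where
  "Wy = Abs_weyl wY"

lemma Rep_Wc: "Rep_weyl (Wc f) = [:f:]"
  by (simp add: Wc_def wC_def)

lemma Rep_Wy: "Rep_weyl Wy = monom 1 1"
  by (simp add: Wy_def wY_def monom_Suc monom_0 one_pCons)

lemma Rep_Wc_mult: "Rep_weyl (Wc f * a) = smult f (Rep_weyl a)"
  by (simp add: Rep_weyl_mult Rep_Wc wmult_const_left)

lemma Rep_mult_Wc_pderiv_eq_0: "pderiv g = 0 \<Longrightarrow> Rep_weyl (a * Wc g) = smult g (Rep_weyl a)"
  using wmult_monom_right_pderiv_eq_0[of g "Rep_weyl a" 0]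
  by (simp add: Rep_weyl_mult Rep_Wc monom_0)

lemma Rep_mult_Wy: "Rep_weyl (a * Wy) = pCons 0 (Rep_weyl a)"
  using wmult_monom_right_pderiv_eq_0[of 1 "Rep_weyl a" 1]
  by (simp add: Rep_weyl_mult Rep_Wy monom_Suc monom_0 mult.commute[of _ "pCons _ _"])

lemma Rep_Wy_mult: "Rep_weyl (Wy * a) = ymult (Rep_weyl a)"
  using wmult_monom_1_Suc[of 0 "Rep_weyl a"] by (simp add: Rep_weyl_mult Rep_Wy)

lemma Rep_Wy_power: "Rep_weyl (Wy ^ n) = monom 1 n"
  by (induct n) (simp_all add: Rep_weyl_1 Rep_Wy_mult ymult_monom)

lemma Rep_Wc_mult_Wy_power: "Rep_weyl (Wc f * Wy ^ n) = monom f n"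
  by (simp add: Rep_Wc_mult Rep_Wy_power smult_monom)

lemma weyl_normal_form: "a = (\<Sum>i\<le>degree (Rep_weyl a). Wc (coeff (Rep_weyl a) i) * Wy ^ i)"
  by (simp add: weyl_eq_iff Rep_weyl_sum Rep_Wc_mult_Wy_power poly_as_sum_of_monoms)

lemma Wc_mult: "Wc (f * g) = Wc f * Wc g"
  by (simp add: weyl_eq_iff Rep_Wc_mult Rep_Wc)

lemma Wc_add: "Wc (f + g) = Wc f + Wc g"
  by (simp add: weyl_eq_iff Rep_weyl_add Rep_Wc)

lemma Wc_0 [simp]: "Wc 0 = 0"
  by (simp add: weyl_eq_iff Rep_Wc)

lemma Wc_1 [simp]: "Wc 1 = 1"
  by (simp add: weyl_eq_iff Rep_Wc one_pCons)

lemma Wc_power: "Wc (f ^ n) = Wc f ^ n"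
  by (induct n) (simp_all add: Wc_mult)

lemma Wc_commute: "Wc f * Wc g = Wc g * Wc f"
  by (simp add: Wc_mult[symmetric] mult.commute)

lemma Wy_Wc: "Wy * Wc f = Wc f * Wy + Wc (pderiv f)"
  by (simp add: weyl_eq_iff Rep_weyl_add Rep_Wy_mult Rep_Wc_mult Rep_Wc Rep_Wy monom_0
      ymult_monom[of f 0, simplified monom_0] smult_monom)

lemma pderiv_x [simp]: "pderiv [:0, 1:] = 1"
  by (simp add: pderiv_pCons one_pCons)

lemma funpow_pderiv_x:
  "(pderiv ^^ k) [:0, 1:] = (if k = 0 then [:0, 1:] else if k = 1 then 1 else 0)"
proof (cases k)
  case (Suc m)
  then show ?thesis
    by (cases m) (auto simp: funpow_Suc_right pderiv_pCons higher_pderiv_eq_0 simp del: funpow.simps)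
qed simp

lemma wmult_monom_x:
  "wmult (monom f i) (monom [:0, 1:] 0) = monom (f * [:0, 1:]) i + pderiv (monom f i)"
proof (cases i)
  case 0
  then show ?thesis by (simp add: wmult_monom pderiv_monom)
next
  case (Suc m)
  have "wmult (monom f i) (monom [:0, 1:] 0) =
      monom (f * [:0, 1:]) i + (\<Sum>k\<le>m. if k = 0 then monom (f * of_nat (Suc m)) m else 0)"
    unfolding wmult_monom Suc sum.atMost_Suc_shift
    by (intro arg_cong2[where f="(+)"] sum.cong refl) (auto simp: funpow_pderiv_x)
  then show ?thesis by (simp add: Suc pderiv_monom mult.commute)
qed

lemma wmult_x: "wmult P [:[:0, 1:]:] = smult [:0, 1:] P + pderiv P"
proof -
  have "wmult P [:[:0, 1:]:] = (\<Sum>i\<le>degree P. wmult (monom (coeff P i) i) (monom [:0, 1:] 0))"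
    by (subst (1) poly_as_sum_of_monoms[of P, symmetric]) (simp add: wmult_sum_left monom_0)
  also have "\<dots> = (\<Sum>i\<le>degree P. smult [:0, 1:] (monom (coeff P i) i) + pderiv (monom (coeff P i) i))"
    by (simp add: wmult_monom_x smult_monom mult.commute)
  also have "\<dots> = smult [:0, 1:] P + pderiv P"
    by (subst (3 4) poly_as_sum_of_monoms[of P, symmetric])
       (simp add: sum.distrib smult_sum_right pderiv_sum)
  finally show ?thesis .
qed

lemma Rep_commutator_Wx: "Rep_weyl (a * Wx - Wx * a) = pderiv (Rep_weyl a)"
  by (simp add: Rep_weyl_diff Rep_weyl_mult Wx_def Rep_Wc wmult_x wmult_const_left)

lemma Rep_commutator_Wy: "Rep_weyl (Wy * a - a * Wy) = map_poly pderiv (Rep_weyl a)"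
  by (simp add: Rep_weyl_diff Rep_Wy_mult Rep_mult_Wy ymult_def)

lemma commute_Wx_iff: "a * Wx = Wx * a \<longleftrightarrow> pderiv (Rep_weyl a) = 0"
  by (metis Rep_commutator_Wx Rep_weyl_0 weyl_eq_iff right_minus_eq)

lemma commute_Wy_iff: "Wy * a = a * Wy \<longleftrightarrow> map_poly pderiv (Rep_weyl a) = 0"
  by (metis Rep_commutator_Wy Rep_weyl_0 weyl_eq_iff right_minus_eq)

lemma commute_Wc_const: "Wc [:c:] * a = a * Wc [:c:]"
  by (simp add: weyl_eq_iff Rep_Wc_mult Rep_mult_Wc_pderiv_eq_0)

lemma commute_Wc_if_commute_Wx:
  assumes "z * Wx = Wx * z"
  shows "z * Wc f = Wc f * z"
proof (induct f rule: pCons_induct)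
  case (pCons a f)
  have split: "Wc (pCons a f) = Wc [:a:] + Wx * Wc f"
    by (simp only: Wx_def Wc_add[symmetric] Wc_mult[symmetric]) simp
  have "z * Wc (pCons a f) = z * Wc [:a:] + (z * Wx) * Wc f"
    by (simp add: split distrib_left mult.assoc)
  also have "\<dots> = Wc [:a:] * z + Wx * (z * Wc f)"
    using assms by (simp add: commute_Wc_const mult.assoc)
  also have "\<dots> = Wc (pCons a f) * z"
    using pCons(2) by (simp add: split distrib_right mult.assoc)
  finally show ?case .
qed simp

lemma commute_if_commute_Wx_Wy:
  assumes "z * Wx = Wx * z" "z * Wy = Wy * z"
  shows "z * b = b * z"
proof -
  have "z * Wy ^ n = Wy ^ n * z" for n
  proof (induct n)
    case (Suc n)
    then show ?case by (metis power_Suc mult.assoc assms(2))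
  qed simp
  then have "z * (Wc f * Wy ^ i) = (Wc f * Wy ^ i) * z" for f i
    using commute_Wc_if_commute_Wx[OF assms(1)] by (metis mult.assoc)
  then show ?thesis
    by (subst (1 2) weyl_normal_form[of b]) (simp add: sum_distrib_left sum_distrib_right)
qed

lemma central_Wc_if_pderiv_eq_0: "pderiv g = 0 \<Longrightarrow> Wc g * b = b * Wc g"
  by (rule commute_if_commute_Wx_Wy) (simp_all add: Wx_def Wc_commute Wy_Wc)

lemma coeff_wmult_const_monom:
  assumes "i \<le> m"
  shows "coeff (wmult (monom c i) [:g:]) m = (if i = m then c * g else 0)"
proof -
  have "coeff (wmult (monom c i) (monom g 0)) m = (\<Sum>k\<le>i. if k = 0 \<and> i = m then c * g else 0)"
    unfolding wmult_monom coeff_sum coeff_monom by (intro sum.cong refl) (use assms in auto)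
  then show ?thesis by (simp add: sum.If_cases monom_0)
qed

lemma coeff_wmult_const:
  assumes "degree P \<le> m"
  shows "coeff (wmult P [:g:]) m = coeff P m * g"
proof -
  have "coeff (wmult P [:g:]) m = (\<Sum>i\<le>degree P. coeff (wmult (monom (coeff P i) i) [:g:]) m)"
    by (subst (1) poly_as_sum_of_monoms[of P, symmetric]) (simp add: wmult_sum_left coeff_sum)
  also have "\<dots> = (\<Sum>i\<le>degree P. if i = m then coeff P i * g else 0)"
    by (intro sum.cong refl) (use assms in \<open>auto simp: coeff_wmult_const_monom\<close>)
  also have "\<dots> = coeff P m * g"
    using assms by (auto simp: coeff_eq_0)
  finally show ?thesis .
qed

lemma degree_Rep_mult_Wc: "degree (Rep_weyl (a * Wc g)) \<le> degree (Rep_weyl a)"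
  by (rule degree_le) (auto simp: Rep_weyl_mult Rep_Wc coeff_wmult_const coeff_eq_0)

lemma coeff_Rep_mult_Wc_top:
  "degree (Rep_weyl a) \<le> m \<Longrightarrow> coeff (Rep_weyl (a * Wc g)) m = coeff (Rep_weyl a) m * g"
  by (simp add: Rep_weyl_mult Rep_Wc coeff_wmult_const)

lemma mult_Wc_eq_0_iff:
  fixes g :: "'a::idom poly"
  assumes "g \<noteq> 0"
  shows "a * Wc g = 0 \<longleftrightarrow> a = 0"
proof
  assume "a * Wc g = 0"
  then have "lead_coeff (Rep_weyl a) * g = 0"
    using coeff_Rep_mult_Wc_top[of a "degree (Rep_weyl a)" g] by (simp add: Rep_weyl_0)
  then show "a = 0"
    using assms by (simp add: weyl_eq_iff)
qed simp

section \<open>The subalgebra A_h\<close>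

abbreviation in_Ah :: "'a::idom weyl \<Rightarrow> 'a poly \<Rightarrow> bool" where
  "in_Ah a h \<equiv> Rep_weyl a \<in> Ah h"

lemma Wc_in_Ah: "in_Ah (Wc f) h"
proof (induct f rule: pCons_induct)
  case 0
  then show ?case using Ah.scalar[of 0 h] by (simp add: wC_def)
next
  case (pCons a f)
  have "Rep_weyl (Wc (pCons a f)) = wC [:a:] + wmult wX (Rep_weyl (Wc f))"
    by (simp add: Rep_Wc wC_def wX_def wmult_const_left)
  then show ?case using pCons(2) by (simp add: Ah.add Ah.scalar Ah.mult Ah.genx)
qed

lemma Rep_Wy_Wc: "Rep_weyl (Wy * Wc h) = wYhat h"
  by (simp add: Rep_weyl_mult wYhat_def Wy_def Wc_def)

lemma yhat_in_Ah: "in_Ah (Wy * Wc h) h"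
  by (simp add: Rep_Wy_Wc Ah.geny)

lemma add_in_Ah: "in_Ah a h \<Longrightarrow> in_Ah b h \<Longrightarrow> in_Ah (a + b) h"
  by (simp add: Rep_weyl_add Ah.add)

lemma mult_in_Ah: "in_Ah a h \<Longrightarrow> in_Ah b h \<Longrightarrow> in_Ah (a * b) h"
  by (simp add: Rep_weyl_mult Ah.mult)

lemma power_in_Ah: "in_Ah a h \<Longrightarrow> in_Ah (a ^ n) h"
  using Wc_in_Ah[of 1 h] by (induct n) (simp_all add: mult_in_Ah)

lemma diff_in_Ah:
  assumes "in_Ah a h" "in_Ah b h"
  shows "in_Ah (a - b) h"
proof -
  have "in_Ah (a + Wc [:-1:] * b) h"
    by (intro add_in_Ah mult_in_Ah Wc_in_Ah assms)
  moreover have "a + Wc [:-1:] * b = a - b"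
    by (simp add: weyl_eq_iff Rep_weyl_diff Rep_weyl_add Rep_Wc_mult) (simp add: poly_eq_iff)
  ultimately show ?thesis by simp
qed

lemma sum_in_Ah: "(\<And>x. x \<in> A \<Longrightarrow> in_Ah (f x) h) \<Longrightarrow> in_Ah (sum f A) h"
  using Wc_in_Ah[of 0 h] by (induct A rule: infinite_finite_induct) (auto simp: add_in_Ah)

lemma center_Ah_iff:
  "Rep_weyl z \<in> center_Ah h \<longleftrightarrow> in_Ah z h \<and> (\<forall>a. in_Ah a h \<longrightarrow> z * a = a * z)"
proof -
  have "(\<forall>a \<in> Ah h. wmult (Rep_weyl z) a = wmult a (Rep_weyl z)) \<longleftrightarrow>
        (\<forall>a. in_Ah a h \<longrightarrow> Rep_weyl (z * a) = Rep_weyl (a * z))"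
    unfolding Rep_weyl_mult by (metis Rep_Abs_weyl)
  then show ?thesis by (simp add: center_Ah_def weyl_eq_iff)
qed

lemma center_Ah_commute_Wx_Wy:
  fixes h :: "'a::idom poly"
  assumes "Rep_weyl z \<in> center_Ah h" "h \<noteq> 0"
  shows "z * Wx = Wx * z" "Wy * z = z * Wy"
proof -
  have comm: "\<And>a. in_Ah a h \<Longrightarrow> z * a = a * z"
    using assms(1) by (simp add: center_Ah_iff)
  show "z * Wx = Wx * z"
    using comm[OF Wc_in_Ah[of "[:0, 1:]"]] by (simp add: Wx_def)
  have "(Wy * z - z * Wy) * Wc h = Wy * (Wc h * z) - z * (Wy * Wc h)"
    using comm[OF Wc_in_Ah] by (simp add: algebra_simps)
  also have "\<dots> = 0"
    using comm[OF Wc_in_Ah] comm[OF yhat_in_Ah] by (simp add: algebra_simps)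
  finally show "Wy * z = z * Wy"
    using mult_Wc_eq_0_iff[OF assms(2)] by simp
qed

text \<open>Elements of A_h lie in the span of the f(x) h^i y^i, because y h and x preserve it:
  applying the k-th derivative to a multiple of h^j leaves a multiple of h^(j-k).\<close>

definition hpow_dvd_coeffs :: "'a::idom poly \<Rightarrow> 'a poly poly set" where
  "hpow_dvd_coeffs h = {P. \<forall>j. h ^ j dvd coeff P j}"

lemma pow_dvd_pderiv: "h ^ m dvd g \<Longrightarrow> h ^ (m - 1) dvd pderiv g"
proof (cases m)
  case (Suc n)
  assume "h ^ m dvd g"
  then obtain q where q: "g = h ^ Suc n * q"
    using Suc by (auto elim: dvdE)
  have "pderiv g = h ^ Suc n * pderiv q + q * (smult (of_nat (Suc n)) (h ^ n) * pderiv h)"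
    unfolding q pderiv_mult pderiv_power_Suc ..
  moreover have "h ^ n dvd h ^ Suc n * pderiv q"
    by (intro dvd_mult2) (simp add: le_imp_power_dvd)
  moreover have "h ^ n dvd q * (smult (of_nat (Suc n)) (h ^ n) * pderiv h)"
    by (intro dvd_mult dvd_mult2 dvd_smult) simp
  ultimately show ?thesis
    using Suc by (simp del: power_Suc)
qed simp

lemma pow_dvd_higher_pderiv: "h ^ j dvd d \<Longrightarrow> h ^ (j - k) dvd (pderiv ^^ k) d"
proof (induct k)
  case (Suc k)
  then have "h ^ (j - k - 1) dvd pderiv ((pderiv ^^ k) d)"
    by (intro pow_dvd_pderiv) simp
  moreover have "j - Suc k = j - k - 1"
    by simp
  ultimately show ?case
    by (simp only: funpow.simps comp_def)
qed simp

lemma hpow_dvd_coeffs_add: "P \<in> hpow_dvd_coeffs h \<Longrightarrow> Q \<in> hpow_dvd_coeffs h \<Longrightarrow> P + Q \<in> hpow_dvd_coeffs h"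
  by (simp add: hpow_dvd_coeffs_def dvd_add)

lemma hpow_dvd_coeffs_sum:
  "(\<And>x. x \<in> A \<Longrightarrow> f x \<in> hpow_dvd_coeffs h) \<Longrightarrow> sum f A \<in> hpow_dvd_coeffs h"
  by (induct A rule: infinite_finite_induct) (auto simp: hpow_dvd_coeffs_def dvd_add)

lemma monom_in_hpow_dvd_coeffs: "h ^ n dvd c \<Longrightarrow> monom c n \<in> hpow_dvd_coeffs h"
  by (simp add: hpow_dvd_coeffs_def coeff_monom)

lemma wmult_monom_in_hpow_dvd_coeffs:
  assumes "h ^ i dvd c" "h ^ j dvd d"
  shows "wmult (monom c i) (monom d j) \<in> hpow_dvd_coeffs h"
  unfolding wmult_monom
proof (rule hpow_dvd_coeffs_sum, rule monom_in_hpow_dvd_coeffs)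
  fix k
  show "h ^ (i + j - k) dvd c * (of_nat (i choose k) * (pderiv ^^ k) d)"
  proof (cases "k \<le> j")
    case True
    then have "h ^ (i + j - k) = h ^ i * h ^ (j - k)"
      by (simp add: power_add[symmetric])
    then show ?thesis
      using assms(1) pow_dvd_higher_pderiv[OF assms(2), of k] by (simp add: mult_dvd_mono)
  next
    case False
    then have "h ^ (i + j - k) dvd h ^ i"
      by (simp add: le_imp_power_dvd)
    then show ?thesis
      using assms(1) by (meson dvd_trans dvd_mult2)
  qed
qed

lemma wmult_in_hpow_dvd_coeffs:
  assumes "P \<in> hpow_dvd_coeffs h" "Q \<in> hpow_dvd_coeffs h"
  shows "wmult P Q \<in> hpow_dvd_coeffs h"
  using assms unfolding wmult_expand[OF order_refl order_refl, of P Q]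
  by (intro hpow_dvd_coeffs_sum wmult_monom_in_hpow_dvd_coeffs) (auto simp: hpow_dvd_coeffs_def)

lemma degree_1_in_hpow_dvd_coeffs:
  assumes "degree P \<le> 1" "h dvd coeff P 1"
  shows "P \<in> hpow_dvd_coeffs h"
  unfolding hpow_dvd_coeffs_def
proof (intro CollectI allI)
  fix j
  show "h ^ j dvd coeff P j"
  proof (cases "j \<le> 1")
    case True
    then have "j = 0 \<or> j = 1" by auto
    then show ?thesis using assms(2) by auto
  next
    case False
    then show ?thesis using assms(1) by (simp add: coeff_eq_0)
  qed
qed

lemma Ah_subset_hpow_dvd_coeffs: "Ah h \<subseteq> hpow_dvd_coeffs h"
proof
  fix P assume "P \<in> Ah h"
  then show "P \<in> hpow_dvd_coeffs h"
  proof (induct rule: Ah.induct)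
    case geny
    have "wYhat h = pCons 0 [:h:] + [:pderiv h:]"
      using map_poly_monom[of pderiv h 0]
      by (simp flip: Rep_Wy_Wc add: Rep_Wy_mult Rep_Wc ymult_def monom_0)
    then show ?case by (intro degree_1_in_hpow_dvd_coeffs) simp_all
  next
    case (add a b)
    then show ?case by (simp add: hpow_dvd_coeffs_add)
  next
    case (mult a b)
    then show ?case by (simp add: wmult_in_hpow_dvd_coeffs)
  qed (simp_all add: degree_1_in_hpow_dvd_coeffs wC_def wX_def)
qed

section \<open>Characteristic zero\<close>

lemma coeff_eq_0_if_pderiv_eq_0:
  fixes P :: "'b::idom poly"
  assumes "pderiv P = 0" "\<not> CHAR('b) dvd n"
  shows "coeff P n = 0"
proof (cases n)
  case (Suc m)
  have "of_nat n * coeff P n = 0"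
    using arg_cong[OF assms(1), of "\<lambda>q. coeff q m"] by (simp add: coeff_pderiv Suc)
  then show ?thesis
    using assms(2) by (simp add: of_nat_eq_0_iff_char_dvd)
qed (use assms in simp)

lemma const_if_pderiv_eq_0_CHAR_0:
  fixes P :: "'b::idom poly"
  assumes "pderiv P = 0" "CHAR('b) = 0"
  shows "P = [:coeff P 0:]"
  using coeff_eq_0_if_pderiv_eq_0[OF assms(1)] assms(2)
  by (auto simp: poly_eq_iff coeff_pCons split: nat.split)

lemma scalar_in_center_Ah: "wC [:c:] \<in> center_Ah h"
proof -
  have "Rep_weyl (Wc [:c:]) \<in> center_Ah h"
    unfolding center_Ah_iff using Wc_in_Ah commute_Wc_const by blast
  then show ?thesis by (simp add: Rep_Wc wC_def)
qed

lemma center_Ah_CHAR_0: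
  fixes h :: "'a::field poly"
  assumes "CHAR('a) = 0" "h \<noteq> 0"
  shows "center_Ah h = {wC [:c:] | c. True}"
proof
  show "center_Ah h \<subseteq> {wC [:c:] | c. True}"
  proof
    fix z0 assume z0: "z0 \<in> center_Ah h"
    define z :: "'a weyl" where "z = Abs_weyl z0"
    have "z * Wx = Wx * z" "Wy * z = z * Wy"
      using center_Ah_commute_Wx_Wy[of z, OF _ assms(2)] z0 by (simp_all add: z_def)
    then have "pderiv z0 = 0" "map_poly pderiv z0 = 0"
      by (simp_all add: commute_Wx_iff commute_Wy_iff z_def)
    then have "z0 = [:coeff z0 0:]" "pderiv (coeff z0 0) = 0"
      using const_if_pderiv_eq_0_CHAR_0[of z0] assms(1) coeff_map_poly[of pderiv z0 0] by simp_all
    then have "z0 = wC [:coeff (coeff z0 0) 0:]"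
      using const_if_pderiv_eq_0_CHAR_0[of "coeff z0 0"] assms(1) by (simp add: wC_def)
    then show "z0 \<in> {wC [:c:] | c. True}" by blast
  qed
next
  show "{wC [:c:] | c. True} \<subseteq> center_Ah h"
    using scalar_in_center_Ah by blast
qed

section \<open>Positive characteristic: the element h^p y^p\<close>

lemma pderiv_power_CHAR: "pderiv (f ^ CHAR('a)) = 0" for f :: "'a::idom poly"
  by (simp add: pderiv_power)

lemma Wy_power_CHAR_central:
  assumes "CHAR('a::idom) = p"
  shows "(Wy :: 'a weyl) ^ p * b = b * Wy ^ p"
proof (rule commute_if_commute_Wx_Wy)
  have "pderiv (Rep_weyl ((Wy :: 'a weyl) ^ p)) = 0"
    using of_nat_CHAR[where 'a='a] by (simp add: assms Rep_Wy_power pderiv_monom of_nat_poly)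
  then show "Wy ^ p * Wx = Wx * (Wy :: 'a weyl) ^ p"
    by (simp add: commute_Wx_iff)
qed (simp add: power_commutes)

lemma Wc_power_mult_Wy_power_CHAR_central:
  assumes "CHAR('a::idom) = p"
  shows "(Wc (h ^ p) * (Wy :: 'a weyl) ^ p) * b = b * (Wc (h ^ p) * Wy ^ p)"
  using central_Wc_if_pderiv_eq_0[OF pderiv_power_CHAR[of h]] Wy_power_CHAR_central[OF assms]
  by (metis assms mult.assoc)

lemma power_Wc_power_mult_Wy_power_CHAR:
  assumes "CHAR('a::idom) = p"
  shows "(Wc g * (Wy :: 'a weyl) ^ p) ^ i = Wc (g ^ i) * Wy ^ (p * i)"
proof (induct i)
  case (Suc i)
  have "(Wc g * Wy ^ p) ^ Suc i = Wc g * (Wy ^ p * Wc (g ^ i)) * Wy ^ (p * i)"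
    by (simp only: power_Suc Suc mult.assoc)
  also have "\<dots> = (Wc g * Wc (g ^ i)) * (Wy ^ p * Wy ^ (p * i))"
    by (simp only: Wy_power_CHAR_central[OF assms] mult.assoc)
  also have "\<dots> = Wc (g ^ Suc i) * Wy ^ (p * Suc i)"
    by (simp only: Wc_mult[symmetric] power_add[symmetric] power_Suc mult_Suc_right)
  finally show ?case .
qed simp

lemma Rep_yhat: "Rep_weyl (Wy * Wc h) = [:pderiv h, h:]"
  using map_poly_monom[of pderiv h 0]
  by (simp add: Rep_Wy_mult Rep_Wc ymult_def monom_0)

lemma Wy_power_mult_Wc_power_eq_prod_list:
  fixes h :: "'a::idom poly"
  shows "Wy ^ n * Wc (h ^ n) = prod_list (map (\<lambda>i. Wy * Wc h + Wc (of_nat i * pderiv h)) [0..<n])"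
proof (induct n)
  case (Suc n)
  have deriv: "pderiv (h ^ n) * h = h ^ n * (of_nat n * pderiv h)"
  proof (cases n)
    case (Suc m)
    show ?thesis
      unfolding Suc pderiv_power_Suc of_nat_mult_conv_smult by (simp add: mult_ac)
  qed simp
  have "Wy ^ n * Wc (h ^ n) * (Wy * Wc h + Wc (of_nat n * pderiv h))
      = Wy ^ n * (Wc (h ^ n) * Wy) * Wc h + Wy ^ n * Wc (h ^ n * (of_nat n * pderiv h))"
    by (simp add: distrib_left distrib_right mult.assoc Wc_mult)
  also have "Wc (h ^ n) * Wy = Wy * Wc (h ^ n) - Wc (pderiv (h ^ n))"
    by (simp add: Wy_Wc)
  also have "Wy ^ n * (Wy * Wc (h ^ n) - Wc (pderiv (h ^ n))) * Wc h
      = (Wy ^ n * Wy) * (Wc (h ^ n) * Wc h) - Wy ^ n * (Wc (pderiv (h ^ n)) * Wc h)"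
    by (simp add: algebra_simps)
  also have "\<dots> = Wy ^ Suc n * Wc (h ^ Suc n) - Wy ^ n * Wc (h ^ n * (of_nat n * pderiv h))"
    by (simp only: power_Suc2 Wc_mult[symmetric] deriv)
  finally show ?case
    using Suc by simp
qed simp

definition ad :: "'b::ring \<Rightarrow> 'b \<Rightarrow> 'b" where
  "ad a b = a * b - b * a"

lemma power_mult_eq_sum_ad:
  fixes a b :: "'b::ring_1"
  shows "a ^ n * b = (\<Sum>k\<le>n. of_nat (n choose k) * (ad a ^^ k) b * a ^ (n - k))"
proof (induct n)
  case (Suc n)
  define T where "T c k m = of_nat c * (ad a ^^ k) b * a ^ m" for c k m
  have add: "\<And>c d k m. T (c + d) k m = T c k m + T d k m"
    by (simp add: T_def distrib_right)
  have step: "a * T c k m = T c (Suc k) m + T c k (Suc m)" for c k m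
    by (simp add: T_def ad_def algebra_simps mult_of_nat_commute power_commutes)
  have "a ^ Suc n * b = a * (a ^ n * b)"
    by (simp add: mult.assoc)
  also have "\<dots> = (\<Sum>k\<le>n. T (n choose k) (Suc k) (n - k) + T (n choose k) k (Suc (n - k)))"
    unfolding Suc T_def[symmetric] by (simp add: sum_distrib_left step)
  also have "\<dots> = (\<Sum>k\<le>Suc n. T (Suc n choose k) k (Suc n - k))"
    by (rule pascal_sum[OF add]) (simp add: T_def)
  finally show ?case by (simp add: T_def)
qed simp

lemma power_prime_mult_eq_ad:
  fixes a b :: "'b::ring_1"
  assumes "prime p" "of_nat p = (0 :: 'b)"
  shows "a ^ p * b = b * a ^ p + (ad a ^^ p) b"
proof -
  have "of_nat (p choose k) = (0 :: 'b)" if k: "0 < k" "k < p" for k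
  proof -
    obtain m where "p choose k = p * m"
      using dvd_choose_prime[of k p] k assms(1) by (auto elim: dvdE)
    then show ?thesis using assms(2) by simp
  qed
  then have "a ^ p * b = (\<Sum>k\<le>p. if k = 0 then b * a ^ p else if k = p then (ad a ^^ p) b else 0)"
    unfolding power_mult_eq_sum_ad by (intro sum.cong refl) (use prime_gt_0_nat[OF assms(1)] in auto)
  also have "\<dots> = b * a ^ p + (ad a ^^ p) b"
    using prime_gt_0_nat[OF assms(1)] by (simp add: sum.If_cases Int_absorb1)
  finally show ?thesis .
qed

lemma ad_yhat_Wc: "ad (Wy * Wc h) (Wc f) = Wc (hderiv h f)"
proof -
  have "ad (Wy * Wc h) (Wc f) = Wy * Wc (h * f) - (Wc f * Wy) * Wc h"
    by (simp add: ad_def mult.assoc Wc_mult)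
  also have "Wc f * Wy = Wy * Wc f - Wc (pderiv f)"
    by (simp add: Wy_Wc)
  finally show ?thesis
    by (simp add: algebra_simps hderiv_def Wc_mult[symmetric])
qed

lemma funpow_ad_yhat_Wc: "(ad (Wy * Wc h) ^^ k) (Wc f) = Wc ((hderiv h ^^ k) f)"
  by (induct k) (simp_all add: ad_yhat_Wc)

lemma dvd_funpow_hderiv: "0 < k \<Longrightarrow> h dvd (hderiv h ^^ k) f"
  by (cases k) (simp_all add: hderiv_def)

lemma of_nat_CHAR_weyl: "of_nat CHAR('a) = (0 :: 'a::idom weyl)"
  by (simp add: weyl_eq_iff Rep_weyl_of_nat of_nat_poly)

lemma degree_coeff_Rep_yhat_power:
  "degree (Rep_weyl ((Wy * Wc h) ^ n)) \<le> n \<and> coeff (Rep_weyl ((Wy * Wc h) ^ n)) n = h ^ n"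
proof (induct n)
  case (Suc n)
  define R where "R = Rep_weyl ((Wy * Wc h) ^ n)"
  have split: "(Wy * Wc h) ^ Suc n = ((Wy * Wc h) ^ n * Wy) * Wc h"
    by (simp only: power_Suc2 mult.assoc)
  have R: "Rep_weyl ((Wy * Wc h) ^ n * Wy) = pCons 0 R"
    by (simp add: Rep_mult_Wy R_def)
  have "degree (pCons 0 R) \<le> Suc n"
    using Suc degree_pCons_le[of 0 R] unfolding R_def by linarith
  then show ?case
    unfolding split using degree_Rep_mult_Wc[of "(Wy * Wc h) ^ n * Wy" h]
      coeff_Rep_mult_Wc_top[of "(Wy * Wc h) ^ n * Wy" "Suc n" h] Suc
    by (simp add: R R_def mult.commute)
qed simp

lemma coeff_eq_0_if_commute_Wx:
  fixes a :: "'a::idom weyl"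
  assumes "a * Wx = Wx * a" "\<not> CHAR('a) dvd n"
  shows "coeff (Rep_weyl a) n = 0"
  using assms by (intro coeff_eq_0_if_pderiv_eq_0) (simp_all add: commute_Wx_iff)

lemma eq_0_if_coeffs_mult_Wy_Wc_eq_0:
  fixes g :: "'a::idom poly"
  assumes "g \<noteq> 0" "\<And>n. 0 < n \<Longrightarrow> coeff (Rep_weyl (a * Wy * Wc g)) n = 0"
  shows "a = 0"
proof (rule ccontr)
  assume "a \<noteq> 0"
  then have "Rep_weyl a \<noteq> 0"
    by (simp add: weyl_eq_iff)
  then have "coeff (Rep_weyl (a * Wy * Wc g)) (Suc (degree (Rep_weyl a))) \<noteq> 0"
    using coeff_Rep_mult_Wc_top[of "a * Wy" "Suc (degree (Rep_weyl a))" g] assms(1)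
    by (simp add: Rep_mult_Wy)
  then show False
    using assms(2) by blast
qed

text \<open>ad(y h)^p x = delta^p(x), so (y h)^p and (delta^p(x)/h) y h have the same commutator
  with x.\<close>

lemma yhat_power_diff_commute_Wx:
  fixes h :: "'a::field poly"
  assumes "CHAR('a) = p" "0 < p"
  defines "D \<equiv> (Wy * Wc h) ^ p - Wc ((hderiv h ^^ p) [:0, 1:] div h) * (Wy * Wc h)"
  shows "D * Wx = Wx * D"
proof -
  define yh :: "'a weyl" where "yh = Wy * Wc h"
  define c where "c = (hderiv h ^^ p) [:0, 1:] div h"
  have hc: "h * c = (hderiv h ^^ p) [:0, 1:]"
    unfolding c_def by (rule dvd_mult_div_cancel[OF dvd_funpow_hderiv[OF assms(2)]])
  have "prime p"
    using prime_CHAR_semidom[where 'a='a] assms(1,2) by simp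
  moreover have "of_nat p = (0 :: 'a weyl)"
    using of_nat_CHAR_weyl[where 'a='a] assms(1) by simp
  ultimately have yh_power: "yh ^ p * Wx = Wx * yh ^ p + Wc (h * c)"
    using power_prime_mult_eq_ad[of p yh Wx] by (simp add: hc yh_def Wx_def funpow_ad_yhat_Wc)
  have "yh * Wx - Wx * yh = Wc h"
    using ad_yhat_Wc[of h "[:0, 1:]"] by (simp add: yh_def Wx_def ad_def hderiv_def)
  then have "yh * Wx = Wx * yh + Wc h"
    by (metis diff_eq_eq add.commute)
  then have "(Wc c * yh) * Wx = Wc c * (Wx * yh + Wc h)"
    by (simp only: mult.assoc)
  also have "\<dots> = Wx * (Wc c * yh) + Wc (h * c)"
    by (simp add: distrib_left mult.assoc[symmetric] Wx_def Wc_commute[of c] Wc_mult mult.commute[of h])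
  finally show ?thesis
    using yh_power by (simp add: D_def yh_def[symmetric] c_def[symmetric] left_diff_distrib right_diff_distrib)
qed

lemma coeff_yhat_power_diff_eq_0:
  assumes "2 \<le> p" "p \<le> n"
  shows "coeff (Rep_weyl ((Wy * Wc h) ^ p - Wc c * (Wy * Wc h) - Wc (h ^ p) * Wy ^ p)) n = 0"
proof -
  have "coeff (Rep_weyl ((Wy * Wc h) ^ p)) n = (if n = p then h ^ p else 0)"
    using degree_coeff_Rep_yhat_power[of h p] assms(2) by (auto simp: coeff_eq_0)
  moreover obtain m where "n = Suc (Suc m)"
    using assms by (metis add_2_eq_Suc le_Suc_ex order_trans)
  ultimately show ?thesis
    by (simp add: Rep_weyl_diff Rep_Wc_mult Rep_Wy_power smult_monom Rep_yhat)
qed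

lemma yhat_power_CHAR:
  fixes h :: "'a::field poly"
  assumes ch: "CHAR('a) = p" and "0 < p" "h \<noteq> 0"
  shows "(Wy * Wc h) ^ p - Wc ((hderiv h ^^ p) [:0, 1:] div h) * (Wy * Wc h) = Wc (h ^ p) * Wy ^ p"
proof -
  define yh :: "'a weyl" where "yh = Wy * Wc h"
  define c where "c = (hderiv h ^^ p) [:0, 1:] div h"
  define D where "D = yh ^ p - Wc c * yh - Wc (h ^ p) * Wy ^ p"
  have "p \<ge> 2"
    using prime_CHAR_semidom[where 'a='a] assms(1,2) by (simp add: prime_ge_2_nat)
  have "D * Wx = Wx * D"
    using yhat_power_diff_commute_Wx[OF assms(1,2), of h]
      Wc_power_mult_Wy_power_CHAR_central[OF ch, of h Wx]
    by (simp add: D_def yh_def c_def algebra_simps)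
  have coeff_D: "coeff (Rep_weyl D) n = 0" if "0 < n" for n
  proof (cases "p dvd n")
    case False
    with \<open>D * Wx = Wx * D\<close> show ?thesis
      using ch by (simp add: coeff_eq_0_if_commute_Wx)
  next
    case True
    then have "p \<le> n"
      using that by (simp add: dvd_imp_le)
    then show ?thesis
      using coeff_yhat_power_diff_eq_0[OF \<open>p \<ge> 2\<close>] by (simp add: D_def yh_def)
  qed
  have "D = (yh ^ (p - 1) - Wc c - Wc (h ^ (p - 1)) * Wy ^ (p - 1)) * Wy * Wc h"
  proof -
    have "Wc (h ^ p) * Wy ^ p = Wc (h ^ (p - 1)) * (Wc h * Wy ^ p)"
      by (simp only: power_minus_mult[OF assms(2), of h, symmetric] Wc_mult mult.assoc)
    also have "\<dots> = Wc (h ^ (p - 1)) * (Wy ^ (p - 1) * Wy * Wc h)"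
      by (simp only: Wy_power_CHAR_central[OF ch, of "Wc h", symmetric]
          power_minus_mult[OF assms(2), of Wy])
    also have "yh ^ p = yh ^ (p - 1) * Wy * Wc h"
      unfolding yh_def by (simp only: power_minus_mult[OF assms(2), of "Wy * Wc h", symmetric] mult.assoc)
    ultimately show ?thesis
      by (simp add: D_def yh_def algebra_simps)
  qed
  then have "D = 0"
    using eq_0_if_coeffs_mult_Wy_Wc_eq_0[OF assms(3)] coeff_D by (metis mult_zero_left)
  then show ?thesis
    by (simp add: D_def yh_def c_def)
qed

section \<open>Positive characteristic: the centre\<close>

lemma pcompose_monom: "pcompose (monom c n) q = smult c (q ^ n)"
  by (induct n) (simp_all add: monom_Suc monom_0 pcompose_pCons)

lemma pcompose_monom_1_eq_sum:
  fixes q :: "'b::comm_semiring_1 poly"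
  shows "pcompose q (monom 1 p) = (\<Sum>j\<le>degree q. monom (coeff q j) (p * j))"
proof -
  have "pcompose q (monom 1 p) = (\<Sum>j\<le>degree q. pcompose (monom (coeff q j) j) (monom 1 p))"
    by (subst (1) poly_as_sum_of_monoms[of q, symmetric]) (simp only: pcompose_sum)
  also have "\<dots> = (\<Sum>j\<le>degree q. monom (coeff q j) (p * j))"
    by (simp add: pcompose_monom monom_power smult_monom)
  finally show ?thesis .
qed

lemma coeff_pcompose_monom_1:
  fixes q :: "'b::comm_semiring_1 poly"
  assumes "0 < p"
  shows "coeff (pcompose q (monom 1 p)) n = (if p dvd n then coeff q (n div p) else 0)"
proof -
  have "coeff (pcompose q (monom 1 p)) n
      = (\<Sum>j\<le>degree q. if j = n div p \<and> p dvd n then coeff q j else 0)"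
    unfolding pcompose_monom_1_eq_sum coeff_sum coeff_monom
    by (intro sum.cong refl) (use assms in auto)
  also have "\<dots> = (if p dvd n then coeff q (n div p) else 0)"
    by (auto simp: coeff_eq_0)
  finally show ?thesis .
qed

lemma pcompose_monom_1_if_coeffs_eq_0:
  fixes f :: "'b::comm_semiring_1 poly"
  assumes "0 < p" "\<And>n. \<not> p dvd n \<Longrightarrow> coeff f n = 0"
  shows "f = pcompose (\<Sum>j\<le>degree f. monom (coeff f (p * j)) j) (monom 1 p)"
proof (rule poly_eqI)
  fix n
  have "coeff f (p * m) = 0" if "degree f < m" for m
    using assms(1) by (intro coeff_eq_0 order.strict_trans2[OF that]) simp
  then have "coeff f (p * m) = (if m \<le> degree f then coeff f (p * m) else 0)" for m
    by simp
  then show "coeff f n = coeff (pcompose (\<Sum>j\<le>degree f. monom (coeff f (p * j)) j) (monom 1 p)) n"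
    using assms by (auto simp: coeff_pcompose_monom_1 coeff_sum coeff_monom sum.If_cases elim!: dvdE)
qed

lemma commute_sum: "(\<And>x. x \<in> A \<Longrightarrow> f x * b = b * f x) \<Longrightarrow> sum f A * b = b * sum f (A :: 'c set)"
  for b :: "'b::ring"
  unfolding sum_distrib_left sum_distrib_right by (rule sum.cong) auto

lemma commute_mult: "x * b = b * x \<Longrightarrow> y * b = b * y \<Longrightarrow> (x * y) * b = b * (x * y)"
  for b :: "'b::ring"
  by (metis mult.assoc)

lemma Rep_weyl_weval2:
  "weval2 Q (Rep_weyl u) (Rep_weyl v) =
   Rep_weyl (\<Sum>i\<le>degree Q. \<Sum>j\<le>degree (coeff Q i). Wc [:coeff (coeff Q i) j:] * (u ^ j * v ^ i))"
  by (simp add: weval2_def Rep_weyl_sum Rep_weyl_mult Rep_weyl_power Rep_Wc wC_def)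

lemma weval2_Wx_power_CHAR:
  fixes h :: "'a::idom poly"
  assumes "CHAR('a) = p"
  shows "weval2 Q (Rep_weyl (Wx ^ p)) (Rep_weyl (Wc (h ^ p) * Wy ^ p))
       = (\<Sum>i\<le>degree Q. monom (h ^ (p * i) * pcompose (coeff Q i) (monom 1 p)) (p * i))"
proof -
  have term_eq: "Rep_weyl (Wc [:c:] * ((Wx ^ p) ^ j * (Wc (h ^ p) * Wy ^ p) ^ i))
      = monom (h ^ (p * i) * monom c (p * j)) (p * i)" for c i j
  proof -
    have "Wc [:c:] * ((Wx ^ p) ^ j * (Wc (h ^ p) * Wy ^ p) ^ i)
        = Wc ([:c:] * [:0, 1:] ^ (p * j) * h ^ (p * i)) * Wy ^ (p * i)"
      by (simp only: Wx_def Wc_power[symmetric] power_Wc_power_mult_Wy_power_CHAR[OF assms]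
          power_mult[symmetric] Wc_mult mult.assoc)
    moreover have "[:c:] * [:0, 1:] ^ (p * j) * h ^ (p * i) = h ^ (p * i) * monom c (p * j)"
      by (simp add: monom_altdef mult.commute)
    ultimately show ?thesis
      by (simp add: Rep_Wc_mult_Wy_power)
  qed
  show ?thesis
    by (simp add: Rep_weyl_weval2 Rep_weyl_sum term_eq monom_sum[symmetric]
        sum_distrib_left[symmetric] pcompose_monom_1_eq_sum)
qed

lemma coeff_weval2_Wx_power_CHAR:
  assumes "0 < p"
  shows "coeff (\<Sum>i\<le>degree Q. monom (h ^ (p * i) * pcompose (coeff Q i) (monom 1 p)) (p * i)) n
       = (if p dvd n then h ^ n * pcompose (coeff Q (n div p)) (monom 1 p) else 0)"
proof -
  have "coeff (\<Sum>i\<le>degree Q. monom (h ^ (p * i) * pcompose (coeff Q i) (monom 1 p)) (p * i)) n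
      = (\<Sum>i\<le>degree Q. if i = n div p \<and> p dvd n
                        then h ^ n * pcompose (coeff Q (n div p)) (monom 1 p) else 0)"
    unfolding coeff_sum coeff_monom by (intro sum.cong refl) (use assms in auto)
  also have "\<dots> = (if p dvd n then h ^ n * pcompose (coeff Q (n div p)) (monom 1 p) else 0)"
    by (auto simp: coeff_eq_0)
  finally show ?thesis .
qed

lemma weval2_Wx_power_CHAR_eq_0_imp:
  fixes h :: "'a::idom poly"
  assumes "CHAR('a) = p" "0 < p" "h \<noteq> 0"
    and "weval2 Q (Rep_weyl (Wx ^ p)) (Rep_weyl (Wc (h ^ p) * Wy ^ p)) = 0"
  shows "Q = 0"
proof (rule poly_eqI)
  fix i
  have "h ^ (p * i) * pcompose (coeff Q i) (monom 1 p) = 0"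
    using arg_cong[OF assms(4), of "\<lambda>P. coeff P (p * i)"] assms(2)
    by (simp add: weval2_Wx_power_CHAR[OF assms(1)] coeff_weval2_Wx_power_CHAR)
  then show "coeff Q i = coeff 0 i"
    using assms(2,3) pcompose_eq_0[of "coeff Q i" "monom 1 p"] by (simp add: degree_monom_eq)
qed

lemma weval2_Wx_power_CHAR_in_center_Ah:
  fixes h :: "'a::field poly"
  assumes ch: "CHAR('a) = p" and "0 < p" "h \<noteq> 0"
  shows "weval2 Q (Rep_weyl (Wx ^ p)) (Rep_weyl (Wc (h ^ p) * Wy ^ p)) \<in> center_Ah h"
proof -
  define u :: "'a weyl" where "u = Wx ^ p"
  define v :: "'a weyl" where "v = Wc (h ^ p) * Wy ^ p"
  have "in_Ah u h"
    unfolding u_def Wx_def by (intro power_in_Ah Wc_in_Ah)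
  moreover have "in_Ah v h"
    unfolding v_def yhat_power_CHAR[OF assms, symmetric]
    by (intro diff_in_Ah power_in_Ah mult_in_Ah yhat_in_Ah Wc_in_Ah)
  moreover have "u * b = b * u" for b
    unfolding u_def Wx_def Wc_power[symmetric]
    by (rule central_Wc_if_pderiv_eq_0) (use pderiv_power_CHAR[of "[:0, 1:] :: 'a poly"] ch in simp)
  moreover have "v * b = b * v" for b
    unfolding v_def by (rule Wc_power_mult_Wy_power_CHAR_central[OF ch])
  ultimately show ?thesis
    unfolding Rep_weyl_weval2 center_Ah_iff u_def[symmetric] v_def[symmetric]
    by (auto intro!: sum_in_Ah mult_in_Ah power_in_Ah Wc_in_Ah commute_sum commute_mult
        commute_Wc_const power_commuting_commutes)
qed

lemma center_Ah_coeffs_CHAR: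
  fixes h :: "'a::field poly"
  assumes ch: "CHAR('a) = p" and "0 < p" "h \<noteq> 0" "z0 \<in> center_Ah h"
  shows "\<not> p dvd n \<Longrightarrow> coeff z0 n = 0"
    and "\<exists>q. coeff z0 (p * i) = h ^ (p * i) * pcompose q (monom 1 p)"
proof -
  define z :: "'a weyl" where "z = Abs_weyl z0"
  have "z * Wx = Wx * z" "Wy * z = z * Wy"
    using center_Ah_commute_Wx_Wy[of z, OF _ assms(3)] assms(4) by (simp_all add: z_def)
  then have x: "pderiv z0 = 0" and y: "\<And>n. pderiv (coeff z0 n) = 0"
    using coeff_map_poly[of pderiv z0] by (simp_all add: commute_Wx_iff commute_Wy_iff z_def)
  show "\<not> p dvd n \<Longrightarrow> coeff z0 n = 0"
    using coeff_eq_0_if_pderiv_eq_0[OF x] ch by simp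
  have "h ^ (p * i) dvd coeff z0 (p * i)"
    using Ah_subset_hpow_dvd_coeffs assms(4) by (auto simp: center_Ah_def hpow_dvd_coeffs_def)
  then obtain b where b: "coeff z0 (p * i) = h ^ (p * i) * b"
    by (elim dvdE)
  have "pderiv (h ^ (p * i)) = 0"
    using pderiv_power_CHAR[of "h ^ i"] ch by (simp add: power_mult[symmetric] mult.commute)
  then have "h ^ (p * i) * pderiv b = 0"
    using y[of "p * i"] by (simp add: b pderiv_mult)
  then have "pderiv b = 0"
    using assms(3) by simp
  then have "b = pcompose (\<Sum>j\<le>degree b. monom (coeff b (p * j)) j) (monom 1 p)"
    using coeff_eq_0_if_pderiv_eq_0[of b] ch assms(2) by (intro pcompose_monom_1_if_coeffs_eq_0) auto
  then show "\<exists>q. coeff z0 (p * i) = h ^ (p * i) * pcompose q (monom 1 p)"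
    using b by metis
qed

lemma center_Ah_subset_weval2_CHAR:
  fixes h :: "'a::field poly"
  assumes ch: "CHAR('a) = p" and "0 < p" "h \<noteq> 0" "z0 \<in> center_Ah h"
  shows "\<exists>Q. z0 = weval2 Q (Rep_weyl (Wx ^ p)) (Rep_weyl (Wc (h ^ p) * Wy ^ p))"
proof -
  obtain q where q: "\<And>i. coeff z0 (p * i) = h ^ (p * i) * pcompose (q i) (monom 1 p)"
    using center_Ah_coeffs_CHAR(2)[OF assms] by metis
  define Q where "Q = (\<Sum>i\<le>degree z0. monom (q i) i)"
  have coeff_Q: "coeff Q i = (if i \<le> degree z0 then q i else 0)" for i
    unfolding Q_def coeff_sum coeff_monom by (simp add: sum.If_cases)
  have "coeff z0 n = (if p dvd n then h ^ n * pcompose (coeff Q (n div p)) (monom 1 p) else 0)" for n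
  proof (cases "p dvd n")
    case True
    then obtain i where n: "n = p * i"
      by (elim dvdE)
    have "coeff z0 n = 0" if "degree z0 < i"
      unfolding n by (intro coeff_eq_0 order.strict_trans2[OF that]) (use assms(2) in simp)
    then show ?thesis
      using assms(2) by (auto simp: n coeff_Q q)
  qed (simp add: center_Ah_coeffs_CHAR(1)[OF assms])
  then have "z0 = (\<Sum>i\<le>degree Q. monom (h ^ (p * i) * pcompose (coeff Q i) (monom 1 p)) (p * i))"
    by (auto intro: poly_eqI simp: coeff_weval2_Wx_power_CHAR[OF assms(2)])
  then show ?thesis
    using weval2_Wx_power_CHAR[OF ch, of Q h] by metis
qed

lemma Rep_Wc_power_mult_Wy_power_CHAR:
  fixes h :: "'a::field poly"
  assumes ch: "CHAR('a) = p" and "0 < p" "h \<noteq> 0"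
  shows "wmult (wC (h ^ p)) (wpow wY p) = Rep_weyl (Wc (h ^ p) * Wy ^ p)"
    and "wmult (wpow wY p) (wC (h ^ p)) = Rep_weyl (Wc (h ^ p) * Wy ^ p)"
    and "wlistprod (map (\<lambda>i. wYhat h + wC (of_nat i * pderiv h)) [0..<p])
         = Rep_weyl (Wc (h ^ p) * Wy ^ p)"
    and "wpow (wYhat h) p - wmult (wC ((hderiv h ^^ p) [:0, 1:] div h)) (wYhat h)
         = Rep_weyl (Wc (h ^ p) * Wy ^ p)"
proof -
  have wY: "wY = Rep_weyl (Wy :: 'a weyl)" and wC: "wC f = Rep_weyl (Wc f)" for f :: "'a poly"
    by (simp_all add: Wy_def Rep_Wc wC_def)
  have yhat: "wYhat h = Rep_weyl (Wy * Wc h)"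
    by (simp add: Rep_Wy_Wc)
  show "wmult (wC (h ^ p)) (wpow wY p) = Rep_weyl (Wc (h ^ p) * Wy ^ p)"
    by (simp add: wY wC Rep_weyl_power Rep_weyl_mult)
  have "wmult (wpow wY p) (wC (h ^ p)) = Rep_weyl (Wy ^ p * Wc (h ^ p))"
    by (simp add: wY wC Rep_weyl_power Rep_weyl_mult)
  then show "wmult (wpow wY p) (wC (h ^ p)) = Rep_weyl (Wc (h ^ p) * Wy ^ p)"
    by (simp add: Wy_power_CHAR_central[OF ch])
  show "wlistprod (map (\<lambda>i. wYhat h + wC (of_nat i * pderiv h)) [0..<p])
      = Rep_weyl (Wc (h ^ p) * Wy ^ p)"
    using Wy_power_mult_Wc_power_eq_prod_list[of p h] Wy_power_CHAR_central[OF ch, of "Wc (h ^ p)"]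
    by (simp add: wlistprod_def Rep_weyl_prod_list yhat wC Rep_weyl_add comp_def)
  have "wpow (wYhat h) p - wmult (wC ((hderiv h ^^ p) [:0, 1:] div h)) (wYhat h)
      = Rep_weyl ((Wy * Wc h) ^ p - Wc ((hderiv h ^^ p) [:0, 1:] div h) * (Wy * Wc h))"
    by (simp add: yhat wC Rep_weyl_power Rep_weyl_mult Rep_weyl_diff)
  then show "wpow (wYhat h) p - wmult (wC ((hderiv h ^^ p) [:0, 1:] div h)) (wYhat h)
      = Rep_weyl (Wc (h ^ p) * Wy ^ p)"
    by (simp add: yhat_power_CHAR[OF assms])
qed

theorem theorem5p3:
  fixes h :: "'a::field poly"
  assumes "h \<noteq> 0"
  shows "(CHAR('a) = 0 \<longrightarrow> center_Ah h = {wC [:c:] | c. True})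
       \<and> (\<forall>p. CHAR('a) = p \<and> p > 0 \<longrightarrow>
           (let U = wpow wX p; V = wmult (wC (h ^ p)) (wpow wY p) in
              (\<forall>Q. weval2 Q U V = 0 \<longrightarrow> Q = 0)
            \<and> center_Ah h = {weval2 Q U V | Q. True}
            \<and> h dvd (hderiv h ^^ p) [:0, 1:]
            \<and> V = wmult (wpow wY p) (wC (h ^ p))
            \<and> V = wlistprod (map (\<lambda>i. wYhat h + wC (of_nat i * pderiv h)) [0..<p])
            \<and> V = wpow (wYhat h) p - wmult (wC ((hderiv h ^^ p) [:0, 1:] div h)) (wYhat h)))"
proof (intro conjI impI allI)
  show "center_Ah h = {wC [:c:] | c. True}" if "CHAR('a) = 0"
    using center_Ah_CHAR_0[OF that assms] .
next
  fix p assume "CHAR('a) = p \<and> p > 0"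
  then have ch: "CHAR('a) = p" and p: "0 < p" by auto
  have U: "wpow wX p = Rep_weyl ((Wx :: 'a weyl) ^ p)"
    by (simp add: Rep_weyl_power Wx_def Rep_Wc wX_def wC_def)
  have "center_Ah h = {weval2 Q (Rep_weyl (Wx ^ p)) (Rep_weyl (Wc (h ^ p) * Wy ^ p)) | Q. True}"
    using center_Ah_subset_weval2_CHAR[OF ch p assms] weval2_Wx_power_CHAR_in_center_Ah[OF ch p assms]
    by blast
  then show "let U = wpow wX p; V = wmult (wC (h ^ p)) (wpow wY p) in
          (\<forall>Q. weval2 Q U V = 0 \<longrightarrow> Q = 0)
        \<and> center_Ah h = {weval2 Q U V | Q. True}
        \<and> h dvd (hderiv h ^^ p) [:0, 1:]
        \<and> V = wmult (wpow wY p) (wC (h ^ p))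
        \<and> V = wlistprod (map (\<lambda>i. wYhat h + wC (of_nat i * pderiv h)) [0..<p])
        \<and> V = wpow (wYhat h) p - wmult (wC ((hderiv h ^^ p) [:0, 1:] div h)) (wYhat h)"
    unfolding Let_def U Rep_Wc_power_mult_Wy_power_CHAR[OF ch p assms]
    using weval2_Wx_power_CHAR_eq_0_imp[OF ch p assms] dvd_funpow_hderiv[OF p] by simp
qed

end
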